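(* For arbitrary qubit density matrices $\rho,\sigma$ (i.e. positive semidefinite $2\times 2$ complex matrices of unit trace), $$\frac{\operatorname{tr}(\rho\sigma)}{\max[\operatorname{tr}(\rho^{2}),\operatorname{tr}(\sigma^{2})]}\;\le\;\left(\operatorname{tr}\sqrt{\sqrt{\rho}\,\sigma\sqrt{\rho}}\right)^{2},$$ i.e. $\mathcal{F}_2(\rho,\sigma)\le\mathcal{F}_1(\rho,\sigma)$.
   Context: $\mathcal{F}_2(\rho,\sigma)=\operatorname{tr}(\rho\sigma)/\max[\operatorname{tr}(\rho^2),\operatorname{tr}(\sigma^2)]$ is the Hilbert–Schmidt fidelity and $\mathcal{F}_1(\rho,\sigma)=(\operatorname{tr}\sqrt{\sqrt{\rho}\sigma\sqrt{\rho}})^2$ is the Uhlmann–Jozsa fidelity; square roots of positive semidefinite matrices are the positive semidefinite square roots. *)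

theory Defs
  imports "HOL-Analysis.Analysis"
begin

text \<open>Qubit (2x2 complex) matrices are represented as complex^2^2.\<close>

definition cadj :: "complex^'n^'n \<Rightarrow> complex^'n^'n" where
  "cadj A = (\<chi> i j. cnj (A $ j $ i))"

definition hermitian :: "complex^'n^'n \<Rightarrow> bool" where
  "hermitian A \<longleftrightarrow> cadj A = A"

definition psd :: "complex^'n^'n \<Rightarrow> bool" where
  "psd A \<longleftrightarrow> hermitian A \<and>
     (\<forall>v::complex^'n. Im (\<Sum>i\<in>UNIV. \<Sum>j\<in>UNIV. cnj (v $ i) * A $ i $ j * v $ j) = 0 \<and>
                       Re (\<Sum>i\<in>UNIV. \<Sum>j\<in>UNIV. cnj (v $ i) * A $ i $ j * v $ j) \<ge> 0)"

definition psd_sqrt :: "complex^'n^'n \<Rightarrow> complex^'n^'n" where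
  "psd_sqrt A = (THE B. psd B \<and> B ** B = A)"

definition density_matrix :: "complex^'n^'n \<Rightarrow> bool" where
  "density_matrix A \<longleftrightarrow> psd A \<and> trace A = 1"

text \<open>Hilbert-Schmidt fidelity F2; all traces involved are real for Hermitian matrices.\<close>
definition fidelity_HS :: "complex^'n^'n \<Rightarrow> complex^'n^'n \<Rightarrow> real" where
  "fidelity_HS \<rho> \<sigma> = Re (trace (\<rho> ** \<sigma>)) / max (Re (trace (\<rho> ** \<rho>))) (Re (trace (\<sigma> ** \<sigma>)))"

definition fidelity_UJ :: "complex^'n^'n \<Rightarrow> complex^'n^'n \<Rightarrow> real" where
  "fidelity_UJ \<rho> \<sigma> = (Re (trace (psd_sqrt (psd_sqrt \<rho> ** \<sigma> ** psd_sqrt \<rho>))))\<^sup>2"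

end

theory Submission
  imports Defs
begin

text \<open>
  For a positive semidefinite 2x2 matrix \<open>M\<close>, Cayley-Hamilton gives
  \<open>(tr \<surd>M)\<^sup>2 = tr M + 2 \<surd>(det M)\<close>. Applied to \<open>M = \<surd>\<rho> \<sigma> \<surd>\<rho>\<close> this yields
  \<open>F\<^sub>1 = tr(\<rho>\<sigma>) + 2 \<surd>(det \<rho> det \<sigma>)\<close>, while \<open>tr \<rho>\<^sup>2 = 1 - 2 det \<rho>\<close> for a qubit state.
  With \<open>T = tr(\<rho>\<sigma>)\<close> and \<open>c = min (det \<rho>) (det \<sigma>)\<close> the denominator of \<open>F\<^sub>2\<close> is \<open>1 - 2c\<close>;
  since \<open>2T \<le> tr \<rho>\<^sup>2 + tr \<sigma>\<^sup>2\<close> gives \<open>T \<le> 1 - 2c\<close>, and \<open>c \<le> \<surd>(det \<rho> det \<sigma>)\<close>,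
  we get \<open>T \<le> (1 - 2c)(T + 2 \<surd>(det \<rho> det \<sigma>))\<close>, i.e. \<open>F\<^sub>2 \<le> F\<^sub>1\<close>.
\<close>

section \<open>Quadratic forms and positive semidefinite matrices\<close>

definition quad_form :: "complex^'n^'n \<Rightarrow> complex^'n \<Rightarrow> complex" where
  "quad_form A v = (\<Sum>i\<in>UNIV. \<Sum>j\<in>UNIV. cnj (v $ i) * A $ i $ j * v $ j)"

lemma psd_iff_quad_form:
  "psd A \<longleftrightarrow> hermitian A \<and> (\<forall>v. Im (quad_form A v) = 0 \<and> 0 \<le> Re (quad_form A v))"
  unfolding psd_def quad_form_def by blast

lemma psd_hermitian: "psd A \<Longrightarrow> hermitian A"
  by (simp add: psd_def)

lemma quad_form_eq_sum_matrix_vector: "quad_form A v = (\<Sum>i\<in>UNIV. cnj (v $ i) * (A *v v) $ i)"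
  unfolding quad_form_def matrix_vector_mult_def by (simp add: sum_distrib_left mult.assoc)

lemma cadj_matrix_mult: "cadj (A ** B) = cadj B ** cadj (A :: complex^'n^'n)"
  unfolding cadj_def matrix_matrix_mult_def
  by (simp add: vec_eq_iff cnj_sum mult.commute)

lemma cnj_hermitian_nth:
  assumes "hermitian A"
  shows "cnj (A $ i $ j) = A $ j $ i"
proof -
  have "cadj A $ j $ i = A $ j $ i" using assms by (simp add: hermitian_def)
  then show ?thesis by (simp add: cadj_def)
qed

lemma quad_form_congruence:
  assumes "hermitian S"
  shows "quad_form (S ** A ** S) v = quad_form A (S *v v)"
proof -
  have cnj_Sv: "cnj ((S *v v) $ k) = (\<Sum>i\<in>UNIV. cnj (v $ i) * S $ i $ k)" for k
    unfolding matrix_vector_mult_def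
    by (simp add: cnj_sum cnj_hermitian_nth[OF assms] mult.commute)
  have "quad_form (S ** A ** S) v = (\<Sum>i\<in>UNIV. cnj (v $ i) * (S *v (A *v (S *v v))) $ i)"
    by (simp add: quad_form_eq_sum_matrix_vector matrix_vector_mul_assoc matrix_mul_assoc)
  also have "\<dots> = (\<Sum>k\<in>UNIV. cnj ((S *v v) $ k) * (A *v (S *v v)) $ k)"
    unfolding cnj_Sv matrix_vector_mult_def[of S "A *v (S *v v)"] vec_lambda_beta
      sum_distrib_left sum_distrib_right mult.assoc
    by (rule sum.swap)
  finally show ?thesis by (simp add: quad_form_eq_sum_matrix_vector)
qed

lemma hermitian_congruence:
  assumes "hermitian S" and "hermitian A"
  shows "hermitian (S ** A ** S)"
  using assms unfolding hermitian_def by (simp add: cadj_matrix_mult matrix_mul_assoc)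

lemma psd_congruence:
  assumes "hermitian S" and "psd A"
  shows "psd (S ** A ** S)"
  using assms hermitian_congruence unfolding psd_iff_quad_form quad_form_congruence[OF assms(1)]
  by blast

lemma psd_diag_nonneg:
  assumes "psd A"
  shows "0 \<le> Re (A $ i $ i)"
proof -
  have "0 \<le> Re (quad_form A (axis i 1))" using assms by (simp add: psd_iff_quad_form)
  moreover have "quad_form A (axis i 1) = A $ i $ i"
    unfolding quad_form_def by (simp add: axis_def sum.remove [where x=i])
  ultimately show ?thesis by simp
qed

lemma psd_trace_nonneg: "psd A \<Longrightarrow> 0 \<le> Re (trace A)"
  unfolding trace_def Re_sum by (intro sum_nonneg psd_diag_nonneg)

lemma trace_mult_hermitian:
  assumes "hermitian B"
  shows "trace (A ** B) = (\<Sum>i\<in>UNIV. \<Sum>j\<in>UNIV. A $ i $ j * cnj (B $ i $ j))"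
  by (simp add: trace_def matrix_matrix_mult_def cnj_hermitian_nth[OF assms])

lemma trace_mult_hermitian_le:
  assumes "hermitian A" and "hermitian B"
  shows "2 * Re (trace (A ** B)) \<le> Re (trace (A ** A)) + Re (trace (B ** B))"
proof -
  have entry: "2 * Re (a * cnj b) \<le> (cmod a)\<^sup>2 + (cmod b)\<^sup>2" for a b :: complex
  proof -
    have "0 \<le> (Re a - Re b)\<^sup>2 + (Im a - Im b)\<^sup>2" by simp
    then show ?thesis unfolding cmod_power2 by (simp add: power2_eq_square algebra_simps)
  qed
  have "2 * Re (trace (A ** B)) = (\<Sum>i\<in>UNIV. \<Sum>j\<in>UNIV. 2 * Re (A $ i $ j * cnj (B $ i $ j)))"
    by (simp add: trace_mult_hermitian[OF assms(2)] sum_distrib_left)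
  also have "\<dots> \<le> (\<Sum>i\<in>UNIV. \<Sum>j\<in>UNIV. (cmod (A $ i $ j))\<^sup>2 + (cmod (B $ i $ j))\<^sup>2)"
    by (intro sum_mono entry)
  also have "\<dots> = Re (trace (A ** A)) + Re (trace (B ** B))"
    unfolding trace_mult_hermitian[OF assms(1)] trace_mult_hermitian[OF assms(2)]
      complex_norm_square[symmetric] by (simp add: sum.distrib)
  finally show ?thesis .
qed

section \<open>Hermitian 2x2 matrices\<close>

lemma mat2_eq_iff:
  "(A::'a^2^2) = B \<longleftrightarrow> A$1$1 = B$1$1 \<and> A$1$2 = B$1$2 \<and> A$2$1 = B$2$1 \<and> A$2$2 = B$2$2"
  by (auto simp: vec_eq_iff forall_2)

lemma cayley_hamilton_2:
  fixes A :: "'a::comm_ring_1^2^2"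
  shows "mat (trace A) ** A = A ** A + mat (det A)"
  unfolding mat2_eq_iff
  by (simp add: matrix_matrix_mult_def mat_def sum_2 trace_def det_2 algebra_simps)

lemma trace_mult_self_2:
  fixes A :: "'a::comm_ring_1^2^2"
  shows "trace (A ** A) = (trace A)\<^sup>2 - 2 * det A"
  by (simp add: matrix_matrix_mult_def trace_def det_2 sum_2 power2_eq_square algebra_simps)

lemma mat_mult_nth: "(mat c ** A) $ i $ j = c * A $ i $ j"
  unfolding matrix_matrix_mult_def mat_def by (simp add: sum.remove [where x=i])

lemma mat_mult_cancel:
  fixes A B :: "'a::field^'n^'m"
  assumes "c \<noteq> 0" and "mat c ** A = mat c ** B"
  shows "A = B"
  using assms by (metis vec_eq_iff mat_mult_nth mult_left_cancel)

definition herm_mat :: "real \<Rightarrow> real \<Rightarrow> complex \<Rightarrow> complex^2^2" where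
  "herm_mat p q z = vector [vector [of_real p, z], vector [cnj z, of_real q]]"

lemma herm_mat_nth [simp]:
  "herm_mat p q z $ 1 $ 1 = of_real p" "herm_mat p q z $ 1 $ 2 = z"
  "herm_mat p q z $ 2 $ 1 = cnj z" "herm_mat p q z $ 2 $ 2 = of_real q"
  by (simp_all add: herm_mat_def)

lemma herm_mat_0: "herm_mat 0 0 0 = 0"
  unfolding mat2_eq_iff by simp

lemma hermitian_herm_mat: "hermitian (herm_mat p q z)"
  unfolding hermitian_def cadj_def mat2_eq_iff by simp

lemma hermitian2_cases:
  assumes "hermitian A"
  obtains p q z where "A = herm_mat p q z"
proof
  have "cnj (A$1$1) = A$1$1" "cnj (A$2$2) = A$2$2" "cnj (A$1$2) = A$2$1"
    by (rule cnj_hermitian_nth[OF assms])+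
  then show "A = herm_mat (Re (A$1$1)) (Re (A$2$2)) (A$1$2)"
    unfolding mat2_eq_iff by (simp add: complex_eq_iff)
qed

lemma trace_herm_mat: "trace (herm_mat p q z) = of_real (p + q)"
  by (simp add: trace_def sum_2)

lemma det_herm_mat: "det (herm_mat p q z) = of_real (p * q - (cmod z)\<^sup>2)"
  unfolding cmod_power2 by (simp add: det_2 complex_eq_iff power2_eq_square)

lemma herm_mat_mult_self:
  "herm_mat p q z ** herm_mat p q z
     = herm_mat (p\<^sup>2 + (cmod z)\<^sup>2) (q\<^sup>2 + (cmod z)\<^sup>2) (of_real (p + q) * z)"
  unfolding mat2_eq_iff cmod_power2
  by (simp add: matrix_matrix_mult_def sum_2 complex_eq_iff power2_eq_square algebra_simps)

lemma quad_form_herm_mat: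
  "quad_form (herm_mat p q z) v
     = of_real (p * (cmod (v$1))\<^sup>2 + q * (cmod (v$2))\<^sup>2 + 2 * Re (cnj (v$1) * z * v$2))"
  unfolding cmod_power2
  by (simp add: quad_form_def sum_2 complex_eq_iff power2_eq_square algebra_simps)

lemma herm_form_completed_square:
  "p * (p * (cmod a)\<^sup>2 + q * (cmod b)\<^sup>2 + 2 * Re (cnj a * z * b))
     = (cmod (of_real p * a + z * b))\<^sup>2 + (p * q - (cmod z)\<^sup>2) * (cmod b)\<^sup>2"
  unfolding cmod_power2 by (simp add: power2_eq_square algebra_simps)

lemma psd_herm_mat_iff_form:
  "psd (herm_mat p q z)
     \<longleftrightarrow> (\<forall>a b. 0 \<le> p * (cmod a)\<^sup>2 + q * (cmod b)\<^sup>2 + 2 * Re (cnj a * z * b))"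
proof -
  have "psd (herm_mat p q z)
      \<longleftrightarrow> (\<forall>v::complex^2. 0 \<le> p * (cmod (v$1))\<^sup>2 + q * (cmod (v$2))\<^sup>2 + 2 * Re (cnj (v$1) * z * v$2))"
    by (simp add: psd_iff_quad_form hermitian_herm_mat quad_form_herm_mat)
  also have "\<dots> \<longleftrightarrow> (\<forall>a b. 0 \<le> p * (cmod a)\<^sup>2 + q * (cmod b)\<^sup>2 + 2 * Re (cnj a * z * b))"
    by (metis vector_2)
  finally show ?thesis .
qed

lemma herm_form_nonneg_imp:
  assumes form_nonneg: "\<And>a b. 0 \<le> p * (cmod a)\<^sup>2 + q * (cmod b)\<^sup>2 + 2 * Re (cnj a * z * b)"
  shows "0 \<le> p" and "0 \<le> q" and "(cmod z)\<^sup>2 \<le> p * q"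
proof -
  show "0 \<le> p" using form_nonneg[of 1 0] by simp
  show "0 \<le> q" using form_nonneg[of 0 1] by simp
  show "(cmod z)\<^sup>2 \<le> p * q"
  proof (cases "p = 0")
    case True
    have "0 \<le> q * (cmod (- cnj z))\<^sup>2 + 2 * Re (cnj (of_real (q + 1)) * z * - cnj z)"
      using form_nonneg[of "of_real (q + 1)" "- cnj z"] True by simp
    also have "\<dots> = - ((q + 2) * (cmod z)\<^sup>2)"
      unfolding cmod_power2 by (simp add: power2_eq_square algebra_simps)
    finally have "(cmod z)\<^sup>2 \<le> 0"
      using \<open>0 \<le> q\<close> by (simp add: mult_le_0_iff)
    with True show ?thesis by simp
  next
    case False
    with \<open>0 \<le> p\<close> have "0 < p" by simp
    have "0 \<le> p * (p * (cmod (- z))\<^sup>2 + q * (cmod (of_real p))\<^sup>2 + 2 * Re (cnj (- z) * z * of_real p))"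
      using \<open>0 < p\<close> by (intro mult_nonneg_nonneg form_nonneg) simp
    also have "\<dots> = (p * q - (cmod z)\<^sup>2) * p\<^sup>2"
      unfolding herm_form_completed_square by (simp add: norm_mult)
    finally show ?thesis
      using \<open>0 < p\<close> by (simp add: zero_le_mult_iff)
  qed
qed

lemma herm_form_nonneg:
  assumes "0 \<le> p" "0 \<le> q" "(cmod z)\<^sup>2 \<le> p * q"
  shows "0 \<le> p * (cmod a)\<^sup>2 + q * (cmod b)\<^sup>2 + 2 * Re (cnj a * z * b)"
proof (cases "p = 0")
  case True
  with assms have "z = 0" by simp
  with True \<open>0 \<le> q\<close> show ?thesis by simp
next
  case False
  with \<open>0 \<le> p\<close> have "0 < p" by simp
  moreover have "0 \<le> p * (p * (cmod a)\<^sup>2 + q * (cmod b)\<^sup>2 + 2 * Re (cnj a * z * b))"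
    unfolding herm_form_completed_square using assms(3) by simp
  ultimately show ?thesis by (simp add: zero_le_mult_iff)
qed

lemma psd_herm_mat_iff:
  "psd (herm_mat p q z) \<longleftrightarrow> 0 \<le> p \<and> 0 \<le> q \<and> (cmod z)\<^sup>2 \<le> p * q"
  unfolding psd_herm_mat_iff_form using herm_form_nonneg_imp herm_form_nonneg by metis

lemma psd_0: "psd (0::complex^2^2)"
  using psd_herm_mat_iff[of 0 0 0] by (simp add: herm_mat_0)

lemma psd2_trace_det:
  fixes A :: "complex^2^2"
  assumes "psd A"
  obtains t d where "trace A = of_real t" "det A = of_real d" "0 \<le> t" "0 \<le> d" "4 * d \<le> t\<^sup>2"
proof -
  obtain p q z where A: "A = herm_mat p q z"
    using hermitian2_cases[OF psd_hermitian[OF assms(1)]] by blast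
  with assms have "0 \<le> p" "0 \<le> q" "(cmod z)\<^sup>2 \<le> p * q"
    by (simp_all add: psd_herm_mat_iff)
  moreover have "4 * (p * q - (cmod z)\<^sup>2) \<le> (p + q)\<^sup>2"
  proof -
    have "(p + q)\<^sup>2 - 4 * (p * q - (cmod z)\<^sup>2) = (p - q)\<^sup>2 + 4 * (cmod z)\<^sup>2"
      by (simp add: power2_eq_square algebra_simps)
    then show ?thesis using zero_le_power2[of "p - q"] zero_le_power2[of "cmod z"] by linarith
  qed
  ultimately show thesis
    by (intro that[of "p + q" "p * q - (cmod z)\<^sup>2"]) (simp_all add: A trace_herm_mat det_herm_mat)
qed

lemma psd2_trace_eq_0:
  fixes A :: "complex^2^2"
  assumes "psd A" and "trace A = 0"
  shows "A = 0"
proof -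
  obtain p q z where A: "A = herm_mat p q z"
    using hermitian2_cases[OF psd_hermitian[OF assms(1)]] by blast
  with assms have "0 \<le> p" "0 \<le> q" "(cmod z)\<^sup>2 \<le> p * q"
    by (simp_all add: psd_herm_mat_iff)
  moreover have "p + q = 0"
    using assms(2) unfolding A trace_herm_mat of_real_eq_0_iff .
  ultimately have "p = 0" "q = 0" by linarith+
  moreover from this \<open>(cmod z)\<^sup>2 \<le> p * q\<close> have "z = 0" by simp
  ultimately show ?thesis by (simp add: A herm_mat_0)
qed

section \<open>Square roots and fidelities of qubit states\<close>

text \<open>The root is \<open>(A + s I) / t\<close> with \<open>s = \<surd>(det A)\<close> and \<open>t = \<surd>(tr A + 2s)\<close>, read off from
  Cayley-Hamilton for the root.\<close>
lemma herm_mat_sqrt: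
  assumes "0 \<le> p" "0 \<le> q" "(cmod z)\<^sup>2 \<le> p * q"
    and s_def: "s = sqrt (p * q - (cmod z)\<^sup>2)" and t_def: "t = sqrt (p + q + 2 * s)"
    and "t \<noteq> 0"
  defines "B \<equiv> herm_mat ((p + s) / t) ((q + s) / t) (z / of_real t)"
  shows "psd B" and "B ** B = herm_mat p q z"
proof -
  have "0 \<le> s" and s_square: "s\<^sup>2 = p * q - (cmod z)\<^sup>2"
    using assms(3) by (simp_all add: s_def)
  then have t_square: "t\<^sup>2 = p + q + 2 * s" and "0 < t"
    using assms(1,2,6) by (simp_all add: t_def)
  have "(p + s) * (q + s) = p * q + s * (p + q + s)"
    by (simp add: algebra_simps)
  moreover have "0 \<le> s * (p + q + s)"
    using assms(1,2) \<open>0 \<le> s\<close> by (intro mult_nonneg_nonneg) simp_all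
  ultimately have "(cmod z)\<^sup>2 \<le> (p + s) * (q + s)"
    using assms(3) by linarith
  then show "psd B"
    using assms(1,2) \<open>0 \<le> s\<close> \<open>0 < t\<close>
    by (simp add: B_def psd_herm_mat_iff norm_divide power_divide power2_eq_square divide_right_mono)
  have "(p + s) / t + (q + s) / t = (p + q + 2 * s) / t"
    by (simp add: add_divide_distrib[symmetric])
  also have "\<dots> = t"
    unfolding t_square[symmetric] using \<open>0 < t\<close> by (simp add: power2_eq_square)
  finally have trace_B: "(p + s) / t + (q + s) / t = t" .
  have "(p + s)\<^sup>2 + (cmod z)\<^sup>2 = p * t\<^sup>2" and "(q + s)\<^sup>2 + (cmod z)\<^sup>2 = q * t\<^sup>2"
    unfolding t_square using s_square by (simp_all add: power2_eq_square algebra_simps)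
  then have diag_B: "((p + s) / t)\<^sup>2 + (cmod (z / of_real t))\<^sup>2 = p"
      "((q + s) / t)\<^sup>2 + (cmod (z / of_real t))\<^sup>2 = q"
    using \<open>0 < t\<close> by (simp_all add: norm_divide power_divide field_simps)
  show "B ** B = herm_mat p q z"
    unfolding B_def herm_mat_mult_self trace_B diag_B using \<open>0 < t\<close> by simp
qed

lemma psd2_sqrt_exists:
  fixes A :: "complex^2^2"
  assumes "psd A"
  shows "\<exists>B. psd B \<and> B ** B = A"
proof -
  obtain p q z where A: "A = herm_mat p q z"
    using hermitian2_cases[OF psd_hermitian[OF assms]] by blast
  with assms have p: "0 \<le> p" and q: "0 \<le> q" and z: "(cmod z)\<^sup>2 \<le> p * q"
    by (simp_all add: psd_herm_mat_iff)
  define s where "s = sqrt (p * q - (cmod z)\<^sup>2)"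
  define t where "t = sqrt (p + q + 2 * s)"
  show ?thesis
  proof (cases "t = 0")
    case True
    moreover have "0 \<le> s" using z by (simp add: s_def)
    ultimately have "p = 0" "q = 0"
      using p q by (simp_all add: t_def)
    with z have "A = 0" by (simp add: A herm_mat_0)
    then show ?thesis using psd_0 by auto
  next
    case False
    then show ?thesis
      using herm_mat_sqrt[OF p q z s_def t_def] unfolding A by blast
  qed
qed

lemma psd2_root_trace_det:
  fixes A B :: "complex^2^2"
  assumes "psd B" and "B ** B = A"
  shows "det B = of_real (sqrt (Re (det A)))"
    and "trace B = of_real (sqrt (Re (trace A) + 2 * sqrt (Re (det A))))"
proof -
  obtain t d where B: "trace B = of_real t" "det B = of_real d" "0 \<le> t" "0 \<le> d"
    using psd2_trace_det[OF assms(1)] by blast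
  have "det A = of_real (d\<^sup>2)"
    unfolding assms(2)[symmetric] det_mul B by (simp add: power2_eq_square)
  then have "sqrt (Re (det A)) = d"
    using \<open>0 \<le> d\<close> by simp
  then show "det B = of_real (sqrt (Re (det A)))"
    using B by simp
  have "trace A = of_real (t\<^sup>2 - 2 * d)"
    unfolding assms(2)[symmetric] trace_mult_self_2 B by simp
  then show "trace B = of_real (sqrt (Re (trace A) + 2 * sqrt (Re (det A))))"
    using B \<open>sqrt (Re (det A)) = d\<close> by simp
qed

text \<open>Trace and determinant of a root are fixed by \<open>psd2_root_trace_det\<close>; Cayley-Hamilton,
  \<open>tr B \<cdot> B = B\<^sup>2 + det B \<cdot> I\<close>, then fixes \<open>B\<close> unless \<open>tr B = 0\<close>, where \<open>B = 0\<close>.\<close>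
lemma psd2_sqrt_unique:
  fixes B C :: "complex^2^2"
  assumes "psd B" and "psd C" and "B ** B = C ** C"
  shows "B = C"
proof -
  have "trace B = trace C" and "det B = det C"
    using psd2_root_trace_det[OF assms(1) assms(3)] psd2_root_trace_det[OF assms(2) refl]
    by simp_all
  show ?thesis
  proof (cases "trace B = 0")
    case True
    have "B = 0"
      by (rule psd2_trace_eq_0[OF assms(1) True])
    moreover have "C = 0"
      by (rule psd2_trace_eq_0[OF assms(2)]) (simp add: True \<open>trace B = trace C\<close>[symmetric])
    ultimately show ?thesis by simp
  next
    case False
    have "mat (trace B) ** B = B ** B + mat (det B)"
      by (rule cayley_hamilton_2)
    also have "\<dots> = mat (trace B) ** C"
      unfolding \<open>trace B = trace C\<close> cayley_hamilton_2 assms(3) \<open>det B = det C\<close> ..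
    finally have "mat (trace B) ** B = mat (trace B) ** C" .
    with False show ?thesis
      by (rule mat_mult_cancel)
  qed
qed

lemma psd2_psd_sqrt:
  fixes A :: "complex^2^2"
  assumes "psd A"
  shows "psd (psd_sqrt A)" and "psd_sqrt A ** psd_sqrt A = A"
proof -
  obtain B where B: "psd B" "B ** B = A"
    using psd2_sqrt_exists[OF assms] by blast
  have "\<exists>!B. psd B \<and> B ** B = A"
  proof (rule ex1I)
    show "psd B \<and> B ** B = A" using B by simp
    show "C = B" if "psd C \<and> C ** C = A" for C
      using that B psd2_sqrt_unique[of C B] by simp
  qed
  then have "psd (psd_sqrt A) \<and> psd_sqrt A ** psd_sqrt A = A"
    unfolding psd_sqrt_def by (rule theI')
  then show "psd (psd_sqrt A)" and "psd_sqrt A ** psd_sqrt A = A" by simp_all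
qed

lemma trace_psd_sqrt2:
  fixes A :: "complex^2^2"
  assumes "psd A"
  shows "(Re (trace (psd_sqrt A)))\<^sup>2 = Re (trace A) + 2 * sqrt (Re (det A))"
proof -
  obtain t d where "trace A = of_real t" "det A = of_real d" "0 \<le> t" "0 \<le> d"
    using psd2_trace_det[OF assms] by blast
  then show ?thesis
    using psd2_root_trace_det(2)[OF psd2_psd_sqrt[OF assms]] by simp
qed

lemma psd2_sqrt_sandwich:
  fixes \<rho> \<sigma> :: "complex^2^2"
  assumes "psd \<rho>" and "psd \<sigma>"
  defines "M \<equiv> psd_sqrt \<rho> ** \<sigma> ** psd_sqrt \<rho>"
  shows "psd M" and "trace M = trace (\<rho> ** \<sigma>)" and "det M = det \<rho> * det \<sigma>"
proof -
  define S where "S = psd_sqrt \<rho>"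
  have M: "M = S ** \<sigma> ** S" and "psd S" and S_square: "S ** S = \<rho>"
    using psd2_psd_sqrt[OF assms(1)] by (simp_all add: M_def S_def)
  show "psd M"
    unfolding M using psd_hermitian[OF \<open>psd S\<close>] assms(2) by (rule psd_congruence)
  show "trace M = trace (\<rho> ** \<sigma>)"
    unfolding M trace_mul_sym[of "S ** \<sigma>" S] matrix_mul_assoc S_square ..
  show "det M = det \<rho> * det \<sigma>"
    unfolding M det_mul S_square[symmetric] by (simp add: ac_simps)
qed

lemma trace_mult_psd2_nonneg:
  fixes \<rho> \<sigma> :: "complex^2^2"
  assumes "psd \<rho>" and "psd \<sigma>"
  shows "0 \<le> Re (trace (\<rho> ** \<sigma>))"
  using psd_trace_nonneg[OF psd2_sqrt_sandwich(1)[OF assms]] psd2_sqrt_sandwich(2)[OF assms]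
  by simp

lemma fidelity_UJ_2:
  fixes \<rho> \<sigma> :: "complex^2^2"
  assumes "psd \<rho>" and "psd \<sigma>"
  shows "fidelity_UJ \<rho> \<sigma> = Re (trace (\<rho> ** \<sigma>)) + 2 * sqrt (Re (det \<rho> * det \<sigma>))"
  unfolding fidelity_UJ_def trace_psd_sqrt2[OF psd2_sqrt_sandwich(1)[OF assms]]
    psd2_sqrt_sandwich(2,3)[OF assms] ..

lemma density_matrix2_purity:
  fixes A :: "complex^2^2"
  assumes "density_matrix A"
  obtains d where "det A = of_real d" "0 \<le> d" "4 * d \<le> 1" "Re (trace (A ** A)) = 1 - 2 * d"
proof -
  have "psd A" and "trace A = 1"
    using assms by (simp_all add: density_matrix_def)
  then obtain t d where "trace A = of_real t" "det A = of_real d" "0 \<le> d" "4 * d \<le> t\<^sup>2"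
    using psd2_trace_det by blast
  moreover from this(1) \<open>trace A = 1\<close> have "t = 1" by simp
  ultimately show thesis
    using \<open>trace A = 1\<close> by (intro that[of d]) (simp_all add: trace_mult_self_2)
qed

lemma fidelity_bound_real:
  fixes a b T :: real
  assumes "0 \<le> a" "0 \<le> b" "4 * a \<le> 1" "4 * b \<le> 1"
    and "0 \<le> T" "2 * T \<le> (1 - 2 * a) + (1 - 2 * b)"
  shows "T / max (1 - 2 * a) (1 - 2 * b) \<le> T + 2 * sqrt (a * b)"
proof -
  define c where "c = min a b"
  have max_eq: "max (1 - 2 * a) (1 - 2 * b) = 1 - 2 * c"
    by (simp add: c_def max_def min_def)
  have "0 \<le> c" "4 * c \<le> 1" "c \<le> a" "c \<le> b"
    using assms by (simp_all add: c_def)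
  then have "T \<le> 1 - 2 * c"
    using assms(6) by linarith
  have "c * c \<le> a * b"
    using \<open>0 \<le> c\<close> \<open>c \<le> a\<close> \<open>c \<le> b\<close> by (intro mult_mono) simp_all
  then have "c \<le> sqrt (a * b)"
    by (simp add: real_le_rsqrt power2_eq_square)
  then have "c * T \<le> sqrt (a * b) * (1 - 2 * c)"
    using assms(1,2) \<open>0 \<le> c\<close> \<open>0 \<le> T\<close> \<open>T \<le> 1 - 2 * c\<close> by (intro mult_mono) simp_all
  then have "T \<le> (1 - 2 * c) * (T + 2 * sqrt (a * b))"
    by (simp add: algebra_simps)
  then show ?thesis
    unfolding max_eq using \<open>4 * c \<le> 1\<close> by (simp add: pos_divide_le_eq mult.commute)
qed

theorem corollary1:
  fixes \<rho> \<sigma> :: "complex^2^2"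
  assumes "density_matrix \<rho>" and "density_matrix \<sigma>"
  shows "fidelity_HS \<rho> \<sigma> \<le> fidelity_UJ \<rho> \<sigma>"
proof -
  have "psd \<rho>" "psd \<sigma>"
    using assms by (simp_all add: density_matrix_def)
  obtain a where a: "det \<rho> = of_real a" "0 \<le> a" "4 * a \<le> 1" "Re (trace (\<rho> ** \<rho>)) = 1 - 2 * a"
    using density_matrix2_purity[OF assms(1)] by blast
  obtain b where b: "det \<sigma> = of_real b" "0 \<le> b" "4 * b \<le> 1" "Re (trace (\<sigma> ** \<sigma>)) = 1 - 2 * b"
    using density_matrix2_purity[OF assms(2)] by blast
  define T where "T = Re (trace (\<rho> ** \<sigma>))"
  have "2 * T \<le> (1 - 2 * a) + (1 - 2 * b)"
    using trace_mult_hermitian_le[OF psd_hermitian psd_hermitian, OF \<open>psd \<rho>\<close> \<open>psd \<sigma>\<close>] a(4) b(4)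
    by (simp add: T_def)
  have "fidelity_HS \<rho> \<sigma> = T / max (1 - 2 * a) (1 - 2 * b)"
    by (simp add: fidelity_HS_def T_def a(4) b(4))
  also have "\<dots> \<le> T + 2 * sqrt (a * b)"
    using a b \<open>2 * T \<le> (1 - 2 * a) + (1 - 2 * b)\<close> trace_mult_psd2_nonneg[OF \<open>psd \<rho>\<close> \<open>psd \<sigma>\<close>]
    by (intro fidelity_bound_real) (simp_all add: T_def)
  also have "\<dots> = fidelity_UJ \<rho> \<sigma>"
    by (simp add: fidelity_UJ_2[OF \<open>psd \<rho>\<close> \<open>psd \<sigma>\<close>] T_def a(1) b(1))
  finally show ?thesis .
qed

end
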